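(* There exist constants $\varepsilon>0$ and $C>0$ such that for all positive integers $n$ and all integers $k$ with $\frac{n}{16}\le k\le\frac{n}{4}$, $g_k(n)\le C(2-\varepsilon)^n$.
   Context: $[n]_0=\{0,1,\dots,n\}$, $S_1+S_2=\{u+v:u\in S_1,v\in S_2\}$. For such $k$, $g_k(n)$ is the sum of $2^{-|(S_1+S_2)\cap[n]_0|}$ over all pairs $S_1,S_2\subseteq[n]_0$ with $0\in S_1\cap S_2$, $n+1\notin S_1+S_2$ and $n+1-k\notin S_1+S_2$. *)

theory Defs
  imports Complex_Main
begin

definition sumset :: "nat set \<Rightarrow> nat set \<Rightarrow> nat set" where
  "sumset S1 S2 = {u + v | u v. u \<in> S1 \<and> v \<in> S2}"

definition g :: "nat \<Rightarrow> nat \<Rightarrow> real" where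
  "g k n = (\<Sum>(S1, S2) \<in> {(S1, S2). S1 \<subseteq> {0..n} \<and> S2 \<subseteq> {0..n} \<and> 0 \<in> S1 \<and> 0 \<in> S2
              \<and> n + 1 \<notin> sumset S1 S2 \<and> int n + 1 - int k \<notin> int ` sumset S1 S2}.
            (1/2) ^ card (sumset S1 S2 \<inter> {0..n}))"

end

theory Submission
  imports Defs
begin

text \<open>Since \<open>0\<close> lies in both sets, \<open>S1 \<union> S2 \<subseteq> (S1 + S2) \<inter> [n]_0\<close>, so \<open>g_k(n)\<close> is at most
  the sum of \<open>2^(-|X \<union> Y|)\<close> over all pairs \<open>X, Y \<subseteq> [n]_0\<close> with no \<open>i \<in> X\<close>, \<open>j \<in> Y\<close> such
  that \<open>i + j\<close> is \<open>n + 1\<close> or \<open>n + 1 - k\<close>. This weight is submultiplicative over disjoint vertex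
  sets and at most \<open>4^|V|\<close> on any vertex set \<open>V\<close>. The residues \<open>r\<close> and \<open>(n + 1 - r) mod k\<close>
  come in pairs; for each of the at least \<open>(k - 2)/2\<close> pairs of distinct residues, the numbers
  in \<open>[1, n]\<close> with these residues form a path of length at least \<open>8\<close> in the graph of
  forbidden sums, and a transfer-matrix computation bounds the weight of such a path of
  length \<open>L\<close> by \<open>0.99 \<cdot> 2^L\<close>. The at most \<open>35\<close> remaining vertices only cost a constant
  factor, so \<open>g_k(n) \<le> 2^36 \<cdot> 0.99^((k - 2)/2) \<cdot> 2^n\<close>, and \<open>k \<ge> n/16\<close> makes this
  exponentially smaller than \<open>2^n\<close>.\<close>

definition cross_free_pairs :: "('a \<Rightarrow> 'a \<Rightarrow> bool) \<Rightarrow> 'a set \<Rightarrow> ('a set \<times> 'a set) set" where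
  "cross_free_pairs E V = {(X, Y). X \<subseteq> V \<and> Y \<subseteq> V \<and> (\<forall>i\<in>X. \<forall>j\<in>Y. \<not> E i j)}"

definition pair_weight :: "'a set \<times> 'a set \<Rightarrow> real" where
  "pair_weight P = (1/2) ^ card (fst P \<union> snd P)"

definition cross_free_weight :: "('a \<Rightarrow> 'a \<Rightarrow> bool) \<Rightarrow> 'a set \<Rightarrow> real" where
  "cross_free_weight E V = sum pair_weight (cross_free_pairs E V)"

lemma pair_weight_nonneg: "0 \<le> pair_weight P"
  by (simp add: pair_weight_def)

lemma finite_cross_free_pairs: "finite V \<Longrightarrow> finite (cross_free_pairs E V)"
  by (rule finite_subset[of _ "Pow V \<times> Pow V"]) (auto simp: cross_free_pairs_def)

lemma cross_free_weight_nonneg: "0 \<le> cross_free_weight E V"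
  unfolding cross_free_weight_def by (simp add: sum_nonneg pair_weight_nonneg)

lemma cross_free_weight_empty [simp]: "cross_free_weight E {} = 1"
proof -
  have "cross_free_pairs E {} = {({}, {})}"
    by (auto simp: cross_free_pairs_def)
  then show ?thesis
    by (simp add: cross_free_weight_def pair_weight_def)
qed

lemma cross_free_weight_antimono_rel:
  assumes "finite V" and "\<And>i j. i \<in> V \<Longrightarrow> j \<in> V \<Longrightarrow> E' i j \<Longrightarrow> E i j"
  shows "cross_free_weight E V \<le> cross_free_weight E' V"
proof -
  have "cross_free_pairs E V \<subseteq> cross_free_pairs E' V"
    using assms(2) by (fastforce simp: cross_free_pairs_def)
  then show ?thesis
    unfolding cross_free_weight_def
    by (intro sum_mono2 finite_cross_free_pairs assms(1)) (simp_all add: pair_weight_nonneg)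
qed

lemma cross_free_weight_le_four_pow:
  assumes "finite V"
  shows "cross_free_weight E V \<le> 4 ^ card V"
proof -
  have "cross_free_weight E V \<le> card (cross_free_pairs E V)"
    unfolding cross_free_weight_def
    using sum_mono[of _ pair_weight "\<lambda>_. 1"] by (simp add: pair_weight_def power_le_one)
  also have "\<dots> \<le> card (Pow V \<times> Pow V)"
    using assms by (intro of_nat_mono card_mono) (auto simp: cross_free_pairs_def)
  also have "\<dots> = (4::real) ^ card V"
    using assms by (simp add: card_cartesian_product card_Pow flip: power_mult_distrib)
  finally show ?thesis .
qed

lemma cross_free_weight_image:
  assumes "inj_on p V"
  shows "cross_free_weight E (p ` V) = cross_free_weight (\<lambda>i j. E (p i) (p j)) V"
proof -
  define h where "h P = (p ` fst P, p ` snd P)" for P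
  have "inj_on h (Pow V \<times> Pow V)"
    using inj_on_image_Pow[OF assms] by (auto simp: h_def inj_on_def)
  then have inj: "inj_on h (cross_free_pairs (\<lambda>i j. E (p i) (p j)) V)"
    by (rule inj_on_subset) (auto simp: cross_free_pairs_def)
  have img: "cross_free_pairs E (p ` V) = h ` cross_free_pairs (\<lambda>i j. E (p i) (p j)) V"
  proof (intro equalityI subsetI)
    fix P assume "P \<in> cross_free_pairs E (p ` V)"
    then obtain X Y where "P = (p ` X, p ` Y)" "X \<subseteq> V" "Y \<subseteq> V" "\<forall>i\<in>X. \<forall>j\<in>Y. \<not> E (p i) (p j)"
      by (auto simp: cross_free_pairs_def subset_image_iff)
    then show "P \<in> h ` cross_free_pairs (\<lambda>i j. E (p i) (p j)) V"
      by (auto simp: h_def cross_free_pairs_def image_iff)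
  qed (auto simp: h_def cross_free_pairs_def)
  have weight: "pair_weight (h P) = pair_weight P" if "P \<in> cross_free_pairs (\<lambda>i j. E (p i) (p j)) V" for P
  proof -
    have "fst P \<union> snd P \<subseteq> V"
      using that by (auto simp: cross_free_pairs_def)
    then have "inj_on p (fst P \<union> snd P)"
      using assms inj_on_subset by blast
    then show ?thesis
      by (simp add: pair_weight_def h_def card_image flip: image_Un)
  qed
  show ?thesis
    unfolding cross_free_weight_def img by (simp add: sum.reindex[OF inj] weight)
qed

lemma cross_free_weight_Un_le:
  assumes "finite V" "finite W" "V \<inter> W = {}"
  shows "cross_free_weight E (V \<union> W) \<le> cross_free_weight E V * cross_free_weight E W"
proof -
  define h where "h P = ((fst P \<inter> V, snd P \<inter> V), (fst P \<inter> W, snd P \<inter> W))" for P :: "'a set \<times> 'a set"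
  let ?A = "cross_free_pairs E (V \<union> W)"
  have inj: "inj_on h ?A"
    by (rule inj_onI) (auto simp: h_def cross_free_pairs_def prod_eq_iff)
  have img: "h ` ?A \<subseteq> cross_free_pairs E V \<times> cross_free_pairs E W"
    by (auto simp: h_def cross_free_pairs_def)
  have weight: "pair_weight P = pair_weight (fst (h P)) * pair_weight (snd (h P))" if "P \<in> ?A" for P
  proof -
    have "fst P \<union> snd P = (fst P \<union> snd P) \<inter> V \<union> (fst P \<union> snd P) \<inter> W"
      using that by (auto simp: cross_free_pairs_def)
    then have "card (fst P \<union> snd P) = card ((fst P \<union> snd P) \<inter> V) + card ((fst P \<union> snd P) \<inter> W)"
      using assms by (metis card_Un_disjoint finite_Int inf_commute inf_left_commute inf_bot_right)
    then show ?thesis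
      by (simp add: pair_weight_def h_def power_add Int_Un_distrib2)
  qed
  have "cross_free_weight E (V \<union> W) = (\<Sum>Q\<in>h ` ?A. pair_weight (fst Q) * pair_weight (snd Q))"
    unfolding cross_free_weight_def by (simp add: sum.reindex[OF inj] weight)
  also have "\<dots> \<le> (\<Sum>Q\<in>cross_free_pairs E V \<times> cross_free_pairs E W. pair_weight (fst Q) * pair_weight (snd Q))"
    using img assms by (intro sum_mono2) (auto simp: finite_cross_free_pairs pair_weight_nonneg)
  also have "\<dots> = cross_free_weight E V * cross_free_weight E W"
    by (simp add: cross_free_weight_def sum_product sum.cartesian_product split_beta)
  finally show ?thesis .
qed

lemma cross_free_weight_UN_le:
  assumes "finite I" "\<And>i. i \<in> I \<Longrightarrow> finite (V i)"
    and "\<And>i j. i \<in> I \<Longrightarrow> j \<in> I \<Longrightarrow> i \<noteq> j \<Longrightarrow> V i \<inter> V j = {}"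
  shows "cross_free_weight E (\<Union>i\<in>I. V i) \<le> (\<Prod>i\<in>I. cross_free_weight E (V i))"
  using assms
proof (induction I rule: finite_induct)
  case (insert a I)
  have "V a \<inter> (\<Union>i\<in>I. V i) = {}"
    using insert.hyps(2) insert.prems(2) by fastforce
  then have "cross_free_weight E (\<Union>i\<in>insert a I. V i)
      \<le> cross_free_weight E (V a) * cross_free_weight E (\<Union>i\<in>I. V i)"
    using insert by (simp add: cross_free_weight_Un_le)
  also have "\<dots> \<le> cross_free_weight E (V a) * (\<Prod>i\<in>I. cross_free_weight E (V i))"
    using insert by (intro mult_left_mono cross_free_weight_nonneg) auto
  finally show ?case
    using insert.hyps by simp
qed simp

lemma cross_free_weight_UN_le_pow:
  assumes "finite I" "\<And>i. i \<in> I \<Longrightarrow> finite (V i)"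
    and "\<And>i j. i \<in> I \<Longrightarrow> j \<in> I \<Longrightarrow> i \<noteq> j \<Longrightarrow> V i \<inter> V j = {}"
    and "0 \<le> c" "\<And>i. i \<in> I \<Longrightarrow> cross_free_weight E (V i) \<le> c * 2 ^ card (V i)"
  shows "cross_free_weight E (\<Union>i\<in>I. V i) \<le> c ^ card I * 2 ^ card (\<Union>i\<in>I. V i)"
proof -
  have "cross_free_weight E (\<Union>i\<in>I. V i) \<le> (\<Prod>i\<in>I. cross_free_weight E (V i))"
    using assms(1-3) by (rule cross_free_weight_UN_le)
  also have "\<dots> \<le> (\<Prod>i\<in>I. c * 2 ^ card (V i))"
    using assms(5) by (intro prod_mono conjI cross_free_weight_nonneg)
  also have "\<dots> = c ^ card I * 2 ^ card (\<Union>i\<in>I. V i)"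
    using assms(1-3) by (simp add: prod.distrib card_UN_disjoint power_sum)
  finally show ?thesis .
qed

lemma sum_UNIV_bool_pair:
  "(\<Sum>s\<in>UNIV. f s) = f (False, False) + f (True, False) + f (False, True) + f (True, True)"
proof -
  have pairs: "(UNIV :: (bool \<times> bool) set) = {(False, False), (True, False), (False, True), (True, True)}"
    by (auto simp: UNIV_bool)
  show ?thesis
    by (subst pairs) (simp add: algebra_simps)
qed

definition path_adj :: "nat \<Rightarrow> nat \<Rightarrow> bool" where
  "path_adj i j \<longleftrightarrow> Suc i = j \<or> Suc j = i"

text \<open>For \<open>L = 0\<close> the index \<open>L - 1\<close> is \<open>0\<close>, which lies in no set of the empty path.\<close>

definition last_state :: "nat \<Rightarrow> nat set \<times> nat set \<Rightarrow> bool \<times> bool" where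
  "last_state L P = (L - 1 \<in> fst P, L - 1 \<in> snd P)"

definition end_weight :: "nat \<Rightarrow> bool \<times> bool \<Rightarrow> real" where
  "end_weight L s = sum pair_weight {P \<in> cross_free_pairs path_adj {..<L}. last_state L P = s}"

lemma cross_free_weight_path_eq: "cross_free_weight path_adj {..<L} = (\<Sum>s\<in>UNIV. end_weight L s)"
  unfolding cross_free_weight_def end_weight_def
  by (rule sum.group[symmetric]) (simp_all add: finite_cross_free_pairs)

lemma end_weight_Suc_le:
  "end_weight (Suc L) (x, y)
     \<le> (if x \<or> y then 1/2 else 1)
        * (\<Sum>(x', y')\<in>UNIV. if \<not> (x' \<and> y) \<and> \<not> (x \<and> y') then end_weight L (x', y') else 0)"
    (is "_ \<le> ?w * _")
proof -
  let ?S = "{P \<in> cross_free_pairs path_adj {..<Suc L}. last_state (Suc L) P = (x, y)}"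
  let ?C = "{(x', y'). \<not> (x' \<and> y) \<and> \<not> (x \<and> y')}"
  let ?T = "{P \<in> cross_free_pairs path_adj {..<L}. last_state L P \<in> ?C}"
  define del where "del P = (fst P - {L}, snd P - {L})" for P :: "nat set \<times> nat set"
  have inj: "inj_on del ?S"
    by (rule inj_onI) (auto simp: del_def last_state_def prod_eq_iff)
  have img: "del ` ?S \<subseteq> ?T"
  proof
    fix Q assume "Q \<in> del ` ?S"
    then obtain X Y where Q: "Q = (X - {L}, Y - {L})" and XY: "X \<subseteq> {..<Suc L}" "Y \<subseteq> {..<Suc L}"
      and free: "\<forall>i\<in>X. \<forall>j\<in>Y. \<not> path_adj i j" and last: "(L \<in> X) = x" "(L \<in> Y) = y"
      by (auto simp: del_def cross_free_pairs_def last_state_def)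
    have "\<not> (L - 1 \<in> X - {L} \<and> y) \<and> \<not> (x \<and> L - 1 \<in> Y - {L})"
      using free last by (cases L) (auto simp: path_adj_def)
    then show "Q \<in> ?T"
      using XY free by (auto simp: Q cross_free_pairs_def last_state_def)
  qed
  have weight: "pair_weight P = ?w * pair_weight (del P)" if "P \<in> ?S" for P
  proof -
    have fin: "finite (fst (del P) \<union> snd (del P))"
      using that by (auto simp: del_def cross_free_pairs_def dest: finite_subset)
    have "fst P \<union> snd P = (if x \<or> y then insert L else id) (fst (del P) \<union> snd (del P))"
      using that by (auto simp: del_def last_state_def)
    then show ?thesis
      using fin by (simp add: pair_weight_def del_def)
  qed
  have "end_weight (Suc L) (x, y) = ?w * sum pair_weight (del ` ?S)"
    unfolding end_weight_def by (simp add: sum.reindex[OF inj] weight sum_distrib_left)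
  also have "\<dots> \<le> ?w * sum pair_weight ?T"
    using img by (intro mult_left_mono sum_mono2) (auto simp: finite_cross_free_pairs pair_weight_nonneg)
  also have "sum pair_weight ?T = (\<Sum>s\<in>?C. sum pair_weight {P \<in> ?T. last_state L P = s})"
    by (rule sum.group[symmetric]) (auto simp: finite_cross_free_pairs)
  also have "\<dots> = sum (end_weight L) ?C"
    unfolding end_weight_def by (intro sum.cong) auto
  also have "\<dots> = (\<Sum>(x', y')\<in>UNIV. if \<not> (x' \<and> y) \<and> \<not> (x \<and> y') then end_weight L (x', y') else 0)"
    by (simp add: sum.inter_filter[symmetric] case_prod_unfold)
  finally show ?thesis .
qed

fun transfer_vec :: "nat \<Rightarrow> real \<times> real \<times> real \<times> real" where
  "transfer_vec 0 = (1, 0, 0, 0)"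
| "transfer_vec (Suc L) =
     (case transfer_vec L of (a, b, c, d) \<Rightarrow> (a + b + c + d, (a + b) / 2, (a + c) / 2, a / 2))"

lemma end_weight_le_transfer_vec:
  assumes "transfer_vec L = (a, b, c, d)"
  shows "end_weight L (False, False) \<le> a \<and> end_weight L (True, False) \<le> b \<and>
    end_weight L (False, True) \<le> c \<and> end_weight L (True, True) \<le> d"
  using assms
proof (induction L arbitrary: a b c d)
  case 0
  have "{P \<in> cross_free_pairs path_adj {..<0}. last_state 0 P = s}
      = (if s = (False, False) then {({}, {})} else {})" for s
    by (auto simp: cross_free_pairs_def last_state_def)
  then show ?case
    using 0 by (simp add: end_weight_def pair_weight_def)
next
  case (Suc L)
  obtain a' b' c' d' where v: "transfer_vec L = (a', b', c', d')"
    by (metis prod_cases4)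
  note IH = Suc.IH[OF v]
  have "end_weight (Suc L) (False, False) \<le> a' + b' + c' + d'"
    using end_weight_Suc_le[of L False False] IH by (simp add: sum_UNIV_bool_pair)
  moreover have "end_weight (Suc L) (True, False) \<le> (a' + b') / 2"
    using end_weight_Suc_le[of L True False] IH by (simp add: sum_UNIV_bool_pair)
  moreover have "end_weight (Suc L) (False, True) \<le> (a' + c') / 2"
    using end_weight_Suc_le[of L False True] IH by (simp add: sum_UNIV_bool_pair)
  moreover have "end_weight (Suc L) (True, True) \<le> a' / 2"
    using end_weight_Suc_le[of L True True] IH by (simp add: sum_UNIV_bool_pair)
  ultimately show ?case
    using Suc.prems v by simp
qed

lemma transfer_vec_8: "transfer_vec 8 = (8233/64, 11373/256, 11373/256, 2113/64)"
  by (simp add: eval_nat_numeral)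

text \<open>\<open>(78, 27, 27, 20)\<close> is a supersolution of the transfer recursion with ratio \<open>49/25 < 2\<close>.\<close>

lemma transfer_vec_le:
  assumes "8 \<le> L" "transfer_vec L = (a, b, c, d)"
  defines "K \<equiv> 1651/1000 * (49/25) ^ (L - 8) :: real"
  shows "a \<le> 78 * K \<and> b \<le> 27 * K \<and> c \<le> 27 * K \<and> d \<le> 20 * K"
  using assms unfolding K_def
proof (induction L arbitrary: a b c d rule: nat_induct_at_least)
  case base
  then show ?case
    by (simp add: transfer_vec_8)
next
  case (Suc L)
  obtain a' b' c' d' where v: "transfer_vec L = (a', b', c', d')"
    by (metis prod_cases4)
  define M :: real where "M = 1651/1000 * (49/25) ^ (L - 8)"
  have "Suc L - 8 = Suc (L - 8)"
    using Suc.hyps by simp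
  then have M_Suc: "1651/1000 * (49/25) ^ (Suc L - 8) = 49/25 * M"
    unfolding M_def by simp
  have "0 \<le> M"
    by (simp add: M_def)
  have IH: "a' \<le> 78 * M" "b' \<le> 27 * M" "c' \<le> 27 * M" "d' \<le> 20 * M"
    using Suc.hyps v unfolding M_def by auto
  have "a = a' + b' + c' + d'" "b = (a' + b') / 2" "c = (a' + c') / 2" "d = a' / 2"
    using Suc v by auto
  then show ?case
    using IH \<open>0 \<le> M\<close> unfolding M_Suc by (auto simp: field_simps)
qed

lemma cross_free_weight_path_le:
  assumes "8 \<le> L"
  shows "cross_free_weight path_adj {..<L} \<le> 99/100 * 2 ^ L"
proof -
  obtain a b c d where v: "transfer_vec L = (a, b, c, d)"
    by (metis prod_cases4)
  have "cross_free_weight path_adj {..<L} \<le> a + b + c + d"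
    using end_weight_le_transfer_vec[OF v] by (simp add: cross_free_weight_path_eq sum_UNIV_bool_pair)
  also have "\<dots> \<le> 152 * (1651/1000 * (49/25) ^ (L - 8))"
    using transfer_vec_le[OF assms v] by simp
  also have "\<dots> \<le> 152 * (1651/1000 * 2 ^ (L - 8))"
    by (intro mult_left_mono power_mono) auto
  also have "\<dots> \<le> 99/100 * 2 ^ (L - 8) * 2 ^ 8"
    by simp
  also have "\<dots> = 99/100 * 2 ^ L"
    using assms by (metis le_add_diff_inverse2 mult.assoc power_add)
  finally show ?thesis .
qed

lemma cross_free_weight_path_image_le:
  assumes "symp E" "inj_on p {..<L}" "8 \<le> L" and edge: "\<And>i. Suc i < L \<Longrightarrow> E (p i) (p (Suc i))"
  shows "cross_free_weight E (p ` {..<L}) \<le> 99/100 * 2 ^ L"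
proof -
  have "cross_free_weight E (p ` {..<L}) = cross_free_weight (\<lambda>i j. E (p i) (p j)) {..<L}"
    using assms(2) by (rule cross_free_weight_image)
  also have "\<dots> \<le> cross_free_weight path_adj {..<L}"
    using edge \<open>symp E\<close> by (intro cross_free_weight_antimono_rel) (auto simp: path_adj_def dest: sympD)
  also have "\<dots> \<le> 99/100 * 2 ^ L"
    using assms(3) by (rule cross_free_weight_path_le)
  finally show ?thesis .
qed

definition forbidden_sum :: "nat \<Rightarrow> nat \<Rightarrow> nat \<Rightarrow> nat \<Rightarrow> bool" where
  "forbidden_sum n k i j \<longleftrightarrow> i + j = n + 1 \<or> i + j + k = n + 1"

lemma symp_forbidden_sum: "symp (forbidden_sum n k)"
  by (auto simp: symp_def forbidden_sum_def)

lemma g_le_cross_free_weight: "g k n \<le> cross_free_weight (forbidden_sum n k) {0..n}"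
proof -
  define G where "G = {(S1, S2). S1 \<subseteq> {0..n} \<and> S2 \<subseteq> {0..n} \<and> 0 \<in> S1 \<and> 0 \<in> S2
    \<and> n + 1 \<notin> sumset S1 S2 \<and> int n + 1 - int k \<notin> int ` sumset S1 S2}"
  have G_sub: "G \<subseteq> cross_free_pairs (forbidden_sum n k) {0..n}"
  proof
    fix P assume "P \<in> G"
    then obtain S1 S2 where P: "P = (S1, S2)" "S1 \<subseteq> {0..n}" "S2 \<subseteq> {0..n}"
      and excl: "n + 1 \<notin> sumset S1 S2" "int n + 1 - int k \<notin> int ` sumset S1 S2"
      by (auto simp: G_def)
    have "\<not> forbidden_sum n k i j" if "i \<in> S1" "j \<in> S2" for i j
    proof -
      have "i + j \<in> sumset S1 S2"
        using that by (auto simp: sumset_def)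
      then have "i + j \<noteq> n + 1" "int (i + j) \<noteq> int n + 1 - int k"
        using excl by (metis image_eqI, metis image_eqI)
      then show ?thesis
        by (auto simp: forbidden_sum_def)
    qed
    then show "P \<in> cross_free_pairs (forbidden_sum n k) {0..n}"
      using P by (auto simp: cross_free_pairs_def)
  qed
  have term_le: "(1/2) ^ card (sumset S1 S2 \<inter> {0..n}) \<le> pair_weight (S1, S2)" if "(S1, S2) \<in> G" for S1 S2
  proof -
    have "S1 \<union> S2 \<subseteq> sumset S1 S2 \<inter> {0..n}"
      using that unfolding G_def sumset_def by (auto intro: exI[of _ 0] add_0_right[symmetric])
    then have "card (S1 \<union> S2) \<le> card (sumset S1 S2 \<inter> {0..n})"
      by (intro card_mono) auto
    then show ?thesis
      by (simp add: pair_weight_def power_decreasing)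
  qed
  have "g k n = (\<Sum>(S1, S2)\<in>G. (1/2) ^ card (sumset S1 S2 \<inter> {0..n}))"
    by (simp add: g_def G_def)
  also have "\<dots> \<le> sum pair_weight G"
    using term_le by (intro sum_mono) auto
  also have "\<dots> \<le> cross_free_weight (forbidden_sum n k) {0..n}"
    unfolding cross_free_weight_def using G_sub
    by (intro sum_mono2 finite_cross_free_pairs) (auto simp: pair_weight_nonneg)
  finally show ?thesis .
qed

text \<open>Both forbidden sums \<open>i + j = n + 1\<close> and \<open>i + j = n + 1 - k\<close> force \<open>j \<equiv> n + 1 - i (mod k)\<close>,
  so they only join the residue classes \<open>r\<close> and \<open>partner n k r\<close>.\<close>

definition partner :: "nat \<Rightarrow> nat \<Rightarrow> nat \<Rightarrow> nat" where
  "partner n k r = (n + 1 - r) mod k"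

lemma partner_less: "0 < k \<Longrightarrow> partner n k r < k"
  by (simp add: partner_def)

lemma partner_mod:
  assumes "x \<le> n + 1"
  shows "partner n k (x mod k) = (n + 1 - x) mod k"
proof -
  have "n + 1 - x mod k = (n + 1 - x) + k * (x div k)"
    using assms minus_mod_eq_mult_div[of x k] mod_less_eq_dividend[of x k] by linarith
  then show ?thesis
    by (simp add: partner_def)
qed

lemma partner_partner:
  assumes "r < k" "k \<le> n + 1"
  shows "partner n k (partner n k r) = r"
  using partner_mod[of "n + 1 - r" n k] assms by (simp add: partner_def)

lemma partner_fixed_double_mod:
  assumes "partner n k r = r" "r \<le> n + 1"
  shows "(2 * r) mod k = (n + 1) mod k"
proof -
  have "(n + 1) mod k = ((n + 1 - r) mod k + r) mod k"
    using assms(2) by (simp add: mod_add_left_eq)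
  then show ?thesis
    using assms(1) by (simp add: partner_def mult_2)
qed

lemma card_partner_fixed_le:
  assumes "k \<le> n + 1"
  shows "card {r. r < k \<and> partner n k r = r} \<le> 2"
proof (cases "{r. r < k \<and> partner n k r = r} = {}")
  case False
  let ?F = "{r. r < k \<and> partner n k r = r}"
  define m where "m = Min ?F"
  have fin: "finite ?F"
    by simp
  have m: "m \<in> ?F" "\<And>x. x \<in> ?F \<Longrightarrow> m \<le> x"
    unfolding m_def using Min_in[OF fin False] Min_le[OF fin] by blast+
  have "x = m + k div 2" if x: "x \<in> ?F" "x \<noteq> m" for x
  proof -
    have "m < x" "x < k"
      using m x by (auto simp: le_less)
    have "(2 * x) mod k = (2 * m) mod k"
      using x m assms partner_fixed_double_mod[of n k x] partner_fixed_double_mod[of n k m] by simp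
    then have "k dvd 2 * x - 2 * m"
      using \<open>m < x\<close> by (simp add: mod_eq_dvd_iff_nat)
    then obtain q where q: "2 * x - 2 * m = k * q"
      by blast
    have "k * q < k * 2" "0 < k * q"
      using q \<open>m < x\<close> \<open>x < k\<close> by linarith+
    then have "q = 1"
      by simp
    then show ?thesis
      using q \<open>m < x\<close> by simp
  qed
  then have "?F \<subseteq> {m, m + k div 2}"
    by blast
  then show ?thesis
    using card_mono[of "{m, m + k div 2}" ?F] card_insert_le_m1[of 2 "{m + k div 2}" m] by fastforce
qed (metis card.empty zero_le)

lemma card_residues_below_partner_ge:
  assumes "0 < k" "k \<le> n + 1"
  shows "k \<le> 2 * card {r. r < k \<and> r < partner n k r} + 2"
proof -
  let ?G = "{r. r < k \<and> r < partner n k r}"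
  let ?B = "{r. r < k \<and> partner n k r < r}"
  let ?F = "{r. r < k \<and> partner n k r = r}"
  have "inj_on (partner n k) ?B"
    by (rule inj_on_inverseI[of _ "partner n k"]) (auto intro: partner_partner assms)
  moreover have "partner n k ` ?B \<subseteq> ?G"
    using partner_partner[OF _ assms(2)] partner_less[OF assms(1)] by auto
  ultimately have "card ?B \<le> card ?G"
    by (simp add: card_inj_on_le)
  have "{..<k} \<subseteq> ?G \<union> ?B \<union> ?F"
    by auto
  then have "k \<le> card (?G \<union> ?B \<union> ?F)"
    using card_mono[of "?G \<union> ?B \<union> ?F" "{..<k}"] by simp
  also have "\<dots> \<le> card ?G + card ?B + card ?F"
    by (meson card_Un_le le_trans add_le_mono order_refl)
  finally show ?thesis
    using \<open>card ?B \<le> card ?G\<close> card_partner_fixed_le[OF assms(2)] by simp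
qed

definition least_pos_rep :: "nat \<Rightarrow> nat \<Rightarrow> nat" where
  "least_pos_rep k r = (if r = 0 then k else r)"

definition pair_class :: "nat \<Rightarrow> nat \<Rightarrow> nat \<Rightarrow> nat set" where
  "pair_class n k r = {x \<in> {1..n}. x mod k = r \<or> x mod k = partner n k r}"

text \<open>The walk through \<^term>\<open>pair_class n k r\<close> that alternates between its two residue
  classes; consecutive entries sum to \<open>n + 1\<close> or \<open>n + 1 - k\<close>.\<close>

definition zigzag :: "nat \<Rightarrow> nat \<Rightarrow> nat \<Rightarrow> nat \<Rightarrow> nat" where
  "zigzag n k r i =
    (if even i then n + 1 - (least_pos_rep k r + i div 2 * k) else least_pos_rep k r + i div 2 * k)"

definition zigzag_length :: "nat \<Rightarrow> nat \<Rightarrow> nat \<Rightarrow> nat" where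
  "zigzag_length n k r = 2 * ((n - least_pos_rep k r) div k + 1)"

lemma residue_class_subset_progression:
  fixes k r n :: nat
  assumes "0 < k" "r < k"
  shows "{x \<in> {1..n}. x mod k = r}
    \<subseteq> (\<lambda>j. least_pos_rep k r + j * k) ` {..(n - least_pos_rep k r) div k}"
proof
  fix x assume x: "x \<in> {x \<in> {1..n}. x mod k = r}"
  let ?s = "least_pos_rep k r"
  have "?s \<le> x"
  proof (cases "r = 0")
    case True
    then have "k dvd x"
      using x by (simp add: dvd_eq_mod_eq_0)
    then show ?thesis
      using x True by (simp add: least_pos_rep_def dvd_imp_le)
  next
    case False
    then show ?thesis
      using x mod_less_eq_dividend[of x k] by (simp add: least_pos_rep_def)
  qed
  moreover have "x mod k = ?s mod k"
    using x assms by (simp add: least_pos_rep_def)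
  ultimately have "x = ?s + ((x - ?s) div k) * k"
    by (simp add: mod_eq_dvd_iff_nat)
  moreover have "(x - ?s) div k \<le> (n - ?s) div k"
    using x by (intro div_le_mono diff_le_mono) simp
  ultimately show "x \<in> (\<lambda>j. ?s + j * k) ` {..(n - ?s) div k}"
    by blast
qed

lemma card_residue_class_le:
  fixes k r n :: nat
  assumes "0 < k" "r < k"
  shows "card {x \<in> {1..n}. x mod k = r} \<le> n div k + 1"
proof -
  let ?s = "least_pos_rep k r"
  have "card {x \<in> {1..n}. x mod k = r} \<le> card ((\<lambda>j. ?s + j * k) ` {..(n - ?s) div k})"
    using residue_class_subset_progression[OF assms] by (intro card_mono) simp_all
  also have "\<dots> \<le> (n - ?s) div k + 1"
    using card_image_le[of "{..(n - ?s) div k}" "\<lambda>j. ?s + j * k"] by simp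
  also have "\<dots> \<le> n div k + 1"
    by (simp add: div_le_mono)
  finally show ?thesis .
qed

context
  fixes n k r :: nat
  assumes k: "0 < k" "k \<le> n" and r: "r < k"
begin

lemma least_pos_rep_progression_le:
  assumes "j \<le> (n - least_pos_rep k r) div k"
  shows "least_pos_rep k r + j * k \<le> n"
proof -
  have "j * k \<le> n - least_pos_rep k r"
    using assms div_times_less_eq_dividend[of "n - least_pos_rep k r" k] by (meson le_trans mult_le_mono1)
  moreover have "least_pos_rep k r \<le> n"
    using k r by (simp add: least_pos_rep_def)
  ultimately show ?thesis
    by linarith
qed

lemma zigzag_mem:
  assumes "i < zigzag_length n k r"
  shows "zigzag n k r i \<in> {1..n}" "zigzag n k r i mod k = (if even i then partner n k r else r)"
proof -
  have le: "least_pos_rep k r + i div 2 * k \<le> n"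
    using assms by (intro least_pos_rep_progression_le) (simp add: zigzag_length_def)
  have rep: "(least_pos_rep k r + i div 2 * k) mod k = r"
    using r by (simp add: least_pos_rep_def)
  show "zigzag n k r i \<in> {1..n}"
    using le k by (auto simp: zigzag_def least_pos_rep_def)
  show "zigzag n k r i mod k = (if even i then partner n k r else r)"
    using rep le partner_mod[of "least_pos_rep k r + i div 2 * k" n k] by (simp add: zigzag_def)
qed

lemma forbidden_sum_zigzag:
  assumes "Suc i < zigzag_length n k r"
  shows "forbidden_sum n k (zigzag n k r i) (zigzag n k r (Suc i))"
proof -
  have "least_pos_rep k r + Suc i div 2 * k \<le> n"
    using assms by (intro least_pos_rep_progression_le) (simp add: zigzag_length_def)
  then show ?thesis
    by (cases "even i") (auto simp: zigzag_def forbidden_sum_def)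
qed

lemma inj_on_zigzag:
  assumes "partner n k r \<noteq> r"
  shows "inj_on (zigzag n k r) {..<zigzag_length n k r}"
proof (rule inj_onI)
  fix i i' assume i: "i \<in> {..<zigzag_length n k r}" and i': "i' \<in> {..<zigzag_length n k r}"
    and eq: "zigzag n k r i = zigzag n k r i'"
  have "even i = even i'"
    using eq zigzag_mem(2)[of i] zigzag_mem(2)[of i'] i i' assms by (auto split: if_splits)
  define a b where "a = least_pos_rep k r + i div 2 * k" and "b = least_pos_rep k r + i' div 2 * k"
  have "a \<le> n" "b \<le> n"
    using i i' by (auto intro!: least_pos_rep_progression_le simp: zigzag_length_def a_def b_def)
  have "a = b"
  proof (cases "even i")
    case True
    then have "n + 1 - a = n + 1 - b"
      using eq \<open>even i = even i'\<close> by (simp add: zigzag_def a_def b_def)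
    then show ?thesis
      using \<open>a \<le> n\<close> \<open>b \<le> n\<close> by linarith
  next
    case False
    then show ?thesis
      using eq \<open>even i = even i'\<close> by (simp add: zigzag_def a_def b_def)
  qed
  then have "i div 2 = i' div 2"
    using k by (simp add: a_def b_def)
  with \<open>even i = even i'\<close> show "i = i'"
    by (metis div_mult_mod_eq parity_cases)
qed

lemma zigzag_image: "zigzag n k r ` {..<zigzag_length n k r} = pair_class n k r"
proof (intro equalityI subsetI)
  fix x assume "x \<in> zigzag n k r ` {..<zigzag_length n k r}"
  then show "x \<in> pair_class n k r"
    using zigzag_mem by (auto simp: pair_class_def)
next
  fix x assume x: "x \<in> pair_class n k r"
  let ?J = "(n - least_pos_rep k r) div k"
  have progression: "\<exists>j\<le>?J. y = least_pos_rep k r + j * k" if "y \<in> {1..n}" "y mod k = r" for y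
    using residue_class_subset_progression[OF k(1) r, of n] that by blast
  show "x \<in> zigzag n k r ` {..<zigzag_length n k r}"
  proof (cases "x mod k = r")
    case True
    then obtain j where "j \<le> ?J" "x = least_pos_rep k r + j * k"
      using progression x by (auto simp: pair_class_def)
    then have "x = zigzag n k r (2 * j + 1)" "2 * j + 1 < zigzag_length n k r"
      by (simp_all add: zigzag_def zigzag_length_def)
    then show ?thesis
      by blast
  next
    case False
    then have "x mod k = partner n k r" "x \<in> {1..n}"
      using x by (auto simp: pair_class_def)
    then have "(n + 1 - x) mod k = r" "n + 1 - x \<in> {1..n}"
      using partner_mod[of x n k] partner_partner[OF r] k by auto
    then obtain j where "j \<le> ?J" "n + 1 - x = least_pos_rep k r + j * k"
      using progression by blast
    moreover have "x = n + 1 - (n + 1 - x)"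
      using \<open>x \<in> {1..n}\<close> by simp
    ultimately have "x = zigzag n k r (2 * j)" "2 * j < zigzag_length n k r"
      by (simp_all add: zigzag_def zigzag_length_def)
    then show ?thesis
      by blast
  qed
qed

end

lemma zigzag_length_ge:
  assumes "0 < k" "4 * k \<le> n" "r < k"
  shows "8 \<le> zigzag_length n k r"
proof -
  have "least_pos_rep k r \<le> k"
    using assms by (simp add: least_pos_rep_def)
  then have "3 * k \<le> n - least_pos_rep k r"
    using assms by linarith
  then have "3 \<le> (n - least_pos_rep k r) div k"
    using div_le_mono[of "3 * k" "n - least_pos_rep k r" k] assms(1) by simp
  then show ?thesis
    by (simp add: zigzag_length_def)
qed

lemma cross_free_weight_pair_class_le:
  assumes "0 < k" "4 * k \<le> n" "r < k" "r < partner n k r"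
  shows "cross_free_weight (forbidden_sum n k) (pair_class n k r) \<le> 99/100 * 2 ^ card (pair_class n k r)"
proof -
  have kn: "k \<le> n"
    using assms by simp
  note inj = inj_on_zigzag[OF assms(1) kn assms(3)] and image = zigzag_image[OF assms(1) kn assms(3)]
  have "card (pair_class n k r) = zigzag_length n k r"
    using card_image[OF inj] assms(4) image by simp
  then show ?thesis
    using cross_free_weight_path_image_le[OF symp_forbidden_sum inj zigzag_length_ge forbidden_sum_zigzag]
      assms kn image by simp
qed

lemma pair_class_disjoint:
  assumes "k \<le> n + 1" "r < k" "r < partner n k r" "r' < k" "r' < partner n k r'" "r \<noteq> r'"
  shows "pair_class n k r \<inter> pair_class n k r' = {}"
  using assms partner_partner[OF assms(2,1)] partner_partner[OF assms(4,1)]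
  by (auto simp: pair_class_def)

lemma pair_classes_cover:
  assumes "0 < k" "k \<le> n + 1" "x \<in> {1..n}" "partner n k (x mod k) \<noteq> x mod k"
  obtains r where "r < k" "r < partner n k r" "x \<in> pair_class n k r"
proof (cases "x mod k < partner n k (x mod k)")
  case True
  then show ?thesis
    using that[of "x mod k"] assms by (auto simp: pair_class_def)
next
  case False
  have "partner n k (partner n k (x mod k)) = x mod k" "partner n k (x mod k) < k"
    using assms by (simp_all add: partner_partner partner_less)
  then show ?thesis
    using that[of "partner n k (x mod k)"] False assms by (auto simp: pair_class_def)
qed

lemma card_outside_pair_classes_le:
  assumes "0 < k" "k \<le> n" "n \<le> 16 * k"
  shows "card ({0..n} - (\<Union>r\<in>{r. r < k \<and> r < partner n k r}. pair_class n k r)) \<le> 35"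
proof -
  let ?F = "{r. r < k \<and> partner n k r = r}"
  have "{0..n} - (\<Union>r\<in>{r. r < k \<and> r < partner n k r}. pair_class n k r)
      \<subseteq> insert 0 (\<Union>r\<in>?F. {x \<in> {1..n}. x mod k = r})"
  proof
    fix x assume x: "x \<in> {0..n} - (\<Union>r\<in>{r. r < k \<and> r < partner n k r}. pair_class n k r)"
    have "partner n k (x mod k) = x mod k" if x_pos: "x \<in> {1..n}"
    proof (rule ccontr)
      assume "partner n k (x mod k) \<noteq> x mod k"
      moreover have "k \<le> n + 1"
        using assms by simp
      ultimately obtain r where "r < k" "r < partner n k r" "x \<in> pair_class n k r"
        using pair_classes_cover[of k n x] x_pos assms(1) by blast
      then show False
        using x by blast
    qed
    then show "x \<in> insert 0 (\<Union>r\<in>?F. {x \<in> {1..n}. x mod k = r})"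
      using x assms by auto
  qed
  then have "card ({0..n} - (\<Union>r\<in>{r. r < k \<and> r < partner n k r}. pair_class n k r))
      \<le> card (insert 0 (\<Union>r\<in>?F. {x \<in> {1..n}. x mod k = r}))"
    by (intro card_mono) auto
  also have "\<dots> \<le> 1 + (\<Sum>r\<in>?F. card {x \<in> {1..n}. x mod k = r})"
    using card_insert_le_m1 card_UN_le[of ?F "\<lambda>r. {x \<in> {1..n}. x mod k = r}"]
    by (simp add: card_insert_if)
  also have "\<dots> \<le> 1 + card ?F * 17"
  proof -
    have "card {x \<in> {1..n}. x mod k = r} \<le> 17" if "r \<in> ?F" for r
      using card_residue_class_le[of k r n] that assms div_le_mono[of n "16 * k" k] by simp
    then show ?thesis
      using sum_bounded_above[of ?F "\<lambda>r. card {x \<in> {1..n}. x mod k = r}" 17] by simp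
  qed
  also have "\<dots> \<le> 35"
    using card_partner_fixed_le[of k n] assms by simp
  finally show ?thesis .
qed

lemma cross_free_weight_forbidden_sum_le:
  assumes k: "0 < k" "4 * k \<le> n" "n \<le> 16 * k"
  shows "cross_free_weight (forbidden_sum n k) {0..n}
    \<le> 2 ^ 36 * (99/100) ^ card {r. r < k \<and> r < partner n k r} * 2 ^ n"
proof -
  let ?E = "forbidden_sum n k"
  let ?G = "{r. r < k \<and> r < partner n k r}"
  define U where "U = (\<Union>r\<in>?G. pair_class n k r)"
  define R where "R = {0..n} - U"
  have U_sub: "U \<subseteq> {0..n}"
    by (auto simp: U_def pair_class_def)
  then have split: "{0..n} = R \<union> U" "R \<inter> U = {}" "finite R" "finite U"
    by (auto simp: R_def intro: finite_subset)
  have "card {0..n} = card R + card U"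
    using split by (simp add: card_Un_disjoint)
  then have card_RU: "card R + card U = n + 1"
    by simp
  have U_bound: "cross_free_weight ?E U \<le> (99/100) ^ card ?G * 2 ^ card U"
    unfolding U_def using k
    by (intro cross_free_weight_UN_le_pow cross_free_weight_pair_class_le pair_class_disjoint)
      (auto simp: pair_class_def)
  have "cross_free_weight ?E R \<le> 4 ^ card R"
    using split by (intro cross_free_weight_le_four_pow) auto
  also have "\<dots> = 2 ^ card R * 2 ^ card R"
    by (simp flip: power_mult_distrib)
  also have "\<dots> \<le> 2 ^ 35 * 2 ^ card R"
    using card_outside_pair_classes_le[of k n] k by (intro mult_right_mono power_increasing) (auto simp: R_def U_def)
  finally have R_bound: "cross_free_weight ?E R \<le> 2 ^ 35 * 2 ^ card R" .
  have "cross_free_weight ?E {0..n} \<le> cross_free_weight ?E R * cross_free_weight ?E U"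
    using split cross_free_weight_Un_le[of R U ?E] by simp
  also have "\<dots> \<le> (2 ^ 35 * 2 ^ card R) * ((99/100) ^ card ?G * 2 ^ card U)"
    by (intro mult_mono R_bound U_bound cross_free_weight_nonneg) simp
  also have "\<dots> = 2 ^ 36 * (99/100) ^ card ?G * 2 ^ n"
    using card_RU by (simp add: power_add flip: power_add)
  finally show ?thesis .
qed

lemma power_99_100_le:
  assumes "n \<le> 32 * (m + 1)"
  shows "(99/100::real) ^ m \<le> 2 * (3999/4000) ^ n"
proof -
  have "99/100 \<le> (1 + (-1/4000::real)) ^ 32"
    using Bernoulli_inequality[of "-1/4000::real" 32] by simp
  then have "(99/100::real) ^ (m + 1) \<le> ((3999/4000) ^ 32) ^ (m + 1)"
    by (intro power_mono) auto
  also have "\<dots> = (3999/4000) ^ (32 * (m + 1))"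
    by (simp only: power_mult)
  also have "\<dots> \<le> (3999/4000) ^ n"
    using assms by (intro power_decreasing) auto
  finally have "99/100 * (99/100::real) ^ m \<le> (3999/4000) ^ n"
    by simp
  moreover have "0 \<le> (99/100::real) ^ m"
    by simp
  ultimately show ?thesis
    by linarith
qed

theorem mainTheorem15:
  shows "\<exists>\<epsilon>::real. \<exists>C::real. \<epsilon> > 0 \<and> C > 0 \<and>
    (\<forall>n::nat. \<forall>k::nat. n > 0 \<and> real n / 16 \<le> real k \<and> real k \<le> real n / 4 \<longrightarrow>
       g k n \<le> C * (2 - \<epsilon>) ^ n)"
proof (intro exI conjI allI impI)
  fix n k :: nat
  assume "n > 0 \<and> real n / 16 \<le> real k \<and> real k \<le> real n / 4"
  then have k: "0 < k" "4 * k \<le> n" "n \<le> 16 * k"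
    by linarith+
  let ?G = "card {r. r < k \<and> r < partner n k r}"
  have "n \<le> 32 * (?G + 1)"
    using card_residues_below_partner_ge[of k n] k by simp
  then have decay: "(99/100::real) ^ ?G \<le> 2 * (3999/4000) ^ n"
    by (rule power_99_100_le)
  have "g k n \<le> cross_free_weight (forbidden_sum n k) {0..n}"
    by (rule g_le_cross_free_weight)
  also have "\<dots> \<le> 2 ^ 36 * (99/100) ^ ?G * 2 ^ n"
    using k by (rule cross_free_weight_forbidden_sum_le)
  also have "\<dots> \<le> 2 ^ 36 * (2 * (3999/4000) ^ n) * 2 ^ n"
    using decay by (intro mult_right_mono mult_left_mono) auto
  also have "\<dots> = 2 ^ 37 * (2 - 1/2000) ^ n"
    by (simp add: power_mult_distrib[symmetric])
  finally show "g k n \<le> 2 ^ 37 * (2 - 1/2000) ^ n" .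
qed simp_all

end
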